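(* Let $L_1,L_2,L_3$ be self-adjoint complex $2\times2$ matrices and consider the stochastic differential equation for a complex process $w$, with $W=(1,w)$, \[ dw=\frac12\sum_{j=1}^3[w(L_j^*L_jW)_0-(L_j^*L_jW)_1]\,dt+\sum_{j=1}^3[w(L_jW)_0^2-(L_jW)_0(L_jW)_1]\,dt+\sum_{j=1}^3[(L_jW)_1-w(L_jW)_0]\,dY^j_t, \] where $Y$ is a standard three-dimensional Wiener process. Its diffusion operator (generator), written in coordinates $w=x+iy$, coincides up to a constant multiplier with the Laplace–Beltrami operator of the unit sphere in stereographic coordinates, $\frac14(1+x^2+y^2)^2\big(\frac{\partial^2}{\partial x^2}+\frac{\partial^2}{\partial y^2}\big)$, if and only if $L_1,L_2,L_3$ form a basis of the real space of traceless self-adjoint $2\times2$ matrices which is orthogonal in the sense that \[ \mathrm{tr}(L_jL_k)=2\big(l^{00}_jl^{00}_k+\mathrm{Re}\,l^{01}_j\,\mathrm{Re}\,l^{01}_k+\mathrm{Im}\,l^{01}_j\,\mathrm{Im}\,l^{01}_k\big)=a\,\delta_{jk} \] for some constant $a$, where $L_j=\begin{pmatrix} l^{00}_j & l^{01}_j\\ \overline{l^{01}_j} & l^{11}_j\end{pmatrix}$. For the Pauli matrices $a=2$, and the diffusion operator equals exactly the Laplace–Beltrami operator when $a=1$.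
   Context: For $v\in\mathbb{C}^2$, $(v)_0,(v)_1$ denote its coordinates. This SDE is the quantum filtering equation for a qubit with vanishing Hamiltonian and coupling operators $L_j$, in the projective coordinate $w=\chi_1/\chi_0$. The Pauli matrices are $\sigma_1=\begin{pmatrix}0&1\\1&0\end{pmatrix}$, $\sigma_2=\begin{pmatrix}0&-i\\ i&0\end{pmatrix}$, $\sigma_3=\begin{pmatrix}1&0\\0&-1\end{pmatrix}$. *)

theory Defs
  imports "HOL-Analysis.Analysis"
begin

type_synonym cmat = "complex^2^2"

text \<open>Conjugate transpose, self-adjointness; matrix indices are 0 and 1 of type 2.\<close>
definition cadj :: "cmat \<Rightarrow> cmat" where
  "cadj A = (\<chi> i j. cnj (A $ j $ i))"

definition selfadj :: "cmat \<Rightarrow> bool" where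
  "selfadj A \<longleftrightarrow> cadj A = A"

definition traceless_sa :: "cmat set" where
  "traceless_sa = {A. selfadj A \<and> trace A = 0}"

definition is_real_basis3 :: "(nat \<Rightarrow> cmat) \<Rightarrow> bool" where
  "is_real_basis3 L \<longleftrightarrow>
     (\<forall>j\<in>{1..3}. L j \<in> traceless_sa) \<and>
     (\<forall>r :: nat \<Rightarrow> real. (\<Sum>j\<in>{1..3}. r j *\<^sub>R L j) = 0 \<longrightarrow> (\<forall>j\<in>{1..3}. r j = 0)) \<and>
     (\<forall>A\<in>traceless_sa. \<exists>r :: nat \<Rightarrow> real. A = (\<Sum>j\<in>{1..3}. r j *\<^sub>R L j))"

definition trace_orth :: "(nat \<Rightarrow> cmat) \<Rightarrow> real \<Rightarrow> bool" where
  "trace_orth L a \<longleftrightarrow>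
     (\<forall>j\<in>{1..3}. \<forall>k\<in>{1..3}. trace (L j ** L k) = of_real a * (if j = k then 1 else 0))"

definition Wv :: "complex \<Rightarrow> complex^2" where
  "Wv w = (\<chi> i. if i = 0 then 1 else w)"

definition drift :: "(nat \<Rightarrow> cmat) \<Rightarrow> complex \<Rightarrow> complex" where
  "drift L w =
     (1/2) * (\<Sum>j\<in>{1..3}. w * ((cadj (L j) ** L j) *v Wv w) $ 0 - ((cadj (L j) ** L j) *v Wv w) $ 1)
     + (\<Sum>j\<in>{1..3}. w * ((L j *v Wv w) $ 0)^2 - (L j *v Wv w) $ 0 * (L j *v Wv w) $ 1)"

definition diffc :: "(nat \<Rightarrow> cmat) \<Rightarrow> nat \<Rightarrow> complex \<Rightarrow> complex" where
  "diffc L j w = (L j *v Wv w) $ 1 - w * (L j *v Wv w) $ 0"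

definition px :: "(complex \<Rightarrow> real) \<Rightarrow> complex \<Rightarrow> real" where
  "px f z = deriv (\<lambda>t. f (z + of_real t)) 0"

definition py :: "(complex \<Rightarrow> real) \<Rightarrow> complex \<Rightarrow> real" where
  "py f z = deriv (\<lambda>t. f (z + \<i> * of_real t)) 0"

definition pxx :: "(complex \<Rightarrow> real) \<Rightarrow> complex \<Rightarrow> real" where
  "pxx f z = px (px f) z"

definition pyy :: "(complex \<Rightarrow> real) \<Rightarrow> complex \<Rightarrow> real" where
  "pyy f z = py (py f) z"

definition pxy :: "(complex \<Rightarrow> real) \<Rightarrow> complex \<Rightarrow> real" where
  "pxy f z = px (py f) z"

text \<open>Diffusion operator (Ito generator) of dw = b dt + sum_j sigma_j dY^j, Y standard
  3-dimensional Wiener process, written in real coordinates w = x + i y.\<close>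
definition gen :: "(nat \<Rightarrow> cmat) \<Rightarrow> (complex \<Rightarrow> real) \<Rightarrow> complex \<Rightarrow> real" where
  "gen L f z =
     Re (drift L z) * px f z + Im (drift L z) * py f z
     + (1/2) * (\<Sum>j\<in>{1..3}.
          (Re (diffc L j z))^2 * pxx f z
          + 2 * Re (diffc L j z) * Im (diffc L j z) * pxy f z
          + (Im (diffc L j z))^2 * pyy f z)"

definition LB :: "(complex \<Rightarrow> real) \<Rightarrow> complex \<Rightarrow> real" where
  "LB f z = (1/4) * (1 + (Re z)^2 + (Im z)^2)^2 * (pxx f z + pyy f z)"

definition pauli :: "nat \<Rightarrow> cmat" where
  "pauli j = (if j = 1 then (\<chi> i k. if i = k then 0 else 1)
              else if j = 2 then (\<chi> i k. if i = k then 0 else if i = 0 then - \<i> else \<i>)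
              else (\<chi> i k. if i = k then (if i = 0 then 1 else -1) else 0))"

end

theory Submission
  imports Defs
begin

text \<open>Write \<open>L\<^sub>j = t\<^sub>j I + \<alpha>\<^sub>j \<sigma>\<^sub>3 + Re \<beta>\<^sub>j \<sigma>\<^sub>1 - Im \<beta>\<^sub>j \<sigma>\<^sub>2\<close>. The coefficient of
  \<open>dY\<^sup>j\<close> is \<open>\<sigma>\<^sub>j(w) = cnj \<beta>\<^sub>j - 2 \<alpha>\<^sub>j w - \<beta>\<^sub>j w\<^sup>2\<close> and the drift is
  \<open>-\<Sum>\<^sub>j (2 t\<^sub>j + \<alpha>\<^sub>j + \<beta>\<^sub>j w) \<sigma>\<^sub>j(w)\<close>. Testing the generator on polynomials of
  degree two shows that it equals \<open>c\<close> times the Laplace-Beltrami operator exactly when the drift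
  vanishes, \<open>\<Sum>\<^sub>j \<sigma>\<^sub>j\<^sup>2 = 0\<close> and \<open>\<Sum>\<^sub>j \<bar>\<sigma>\<^sub>j\<bar>\<^sup>2 = c (1 + \<bar>w\<bar>\<^sup>2)\<^sup>2\<close>.

  The quartic \<open>\<Sum>\<^sub>j \<sigma>\<^sub>j\<^sup>2\<close> vanishes identically iff the real \<open>3 \<times> 3\<close> matrix \<open>M\<close> with
  rows \<open>(\<alpha>\<^sub>j, Re \<beta>\<^sub>j, Im \<beta>\<^sub>j)\<close> has orthogonal columns of a common squared length \<open>s\<close>;
  then \<open>\<Sum>\<^sub>j \<bar>\<sigma>\<^sub>j\<bar>\<^sup>2 = 2 s (1 + \<bar>w\<bar>\<^sup>2)\<^sup>2\<close> and the drift reduces to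
  \<open>-2 \<Sum>\<^sub>j t\<^sub>j \<sigma>\<^sub>j\<close>, which vanishes iff all \<open>t\<^sub>j = 0\<close>. Finally \<open>M\<close> has orthogonal columns
  iff it has orthogonal rows, and for traceless \<open>L\<^sub>j\<close> orthogonal rows with \<open>s \<noteq> 0\<close> say exactly
  that the \<open>L\<^sub>j\<close> form a basis with \<open>tr (L\<^sub>j L\<^sub>k) = 2 s \<delta>\<^sub>j\<^sub>k\<close>.\<close>

lemma UNIV_2_eq: "(UNIV :: 2 set) = {0, 1}"
proof -
  have two: "(2::2) = 0" by simp
  show ?thesis using UNIV_2 unfolding two by auto
qed

lemma sum_UNIV_2: "sum f (UNIV :: 2 set) = f 0 + f 1"
  by (simp add: UNIV_2_eq)

lemma forall_UNIV_2: "(\<forall>i::2. P i) \<longleftrightarrow> P 0 \<and> P 1"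
proof -
  have "(\<forall>i::2. P i) \<longleftrightarrow> (\<forall>i\<in>UNIV. P i)" by simp
  then show ?thesis unfolding UNIV_2_eq by simp
qed

lemma sum_1_to_3: "sum f {1..3::nat} = f 1 + f 2 + f 3"
proof -
  have "{1..3::nat} = {1, 2, 3}" by auto
  then show ?thesis by (simp add: add.assoc)
qed

section \<open>Pauli coordinates of self-adjoint matrices\<close>

text \<open>\<open>hmat t \<alpha> \<beta>\<close> is \<open>t I + \<alpha> \<sigma>\<^sub>3 + Re \<beta> \<sigma>\<^sub>1 - Im \<beta> \<sigma>\<^sub>2\<close>.\<close>

definition hmat :: "real \<Rightarrow> real \<Rightarrow> complex \<Rightarrow> cmat" where
  "hmat t \<alpha> \<beta> = (\<chi> i k. if i = 0 then (if k = 0 then of_real (t + \<alpha>) else \<beta>)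
                        else (if k = 0 then cnj \<beta> else of_real (t - \<alpha>)))"

lemma hmat_nth [simp]:
  "hmat t \<alpha> \<beta> $ 0 $ 0 = of_real (t + \<alpha>)" "hmat t \<alpha> \<beta> $ 0 $ 1 = \<beta>"
  "hmat t \<alpha> \<beta> $ 1 $ 0 = cnj \<beta>" "hmat t \<alpha> \<beta> $ 1 $ 1 = of_real (t - \<alpha>)"
  by (simp_all add: hmat_def)

lemma hmat_eq_iff:
  "X = hmat t \<alpha> \<beta> \<longleftrightarrow>
     X $ 0 $ 0 = of_real (t + \<alpha>) \<and> X $ 0 $ 1 = \<beta> \<and> X $ 1 $ 0 = cnj \<beta> \<and> X $ 1 $ 1 = of_real (t - \<alpha>)"
  by (auto simp: vec_eq_iff forall_UNIV_2)

lemma hmat_eq_0_iff: "hmat 0 \<alpha> \<beta> = 0 \<longleftrightarrow> \<alpha> = 0 \<and> \<beta> = 0"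
  using hmat_eq_iff[of 0 0 \<alpha> \<beta>] by auto

lemma selfadj_hmat: "selfadj (hmat t \<alpha> \<beta>)"
  by (simp add: selfadj_def cadj_def vec_eq_iff forall_UNIV_2)

lemma selfadj_imp_hmat:
  assumes "selfadj X"
  shows "X = hmat (Re (trace X) / 2) (Re (X $ 0 $ 0 - X $ 1 $ 1) / 2) (X $ 0 $ 1)"
proof -
  have "X $ i $ k = cnj (X $ k $ i)" for i k
  proof -
    have "cadj X $ i $ k = X $ i $ k" using assms by (simp add: selfadj_def)
    then show ?thesis by (simp add: cadj_def)
  qed
  from this[of 0 0] this[of 1 1] this[of 1 0] show ?thesis
    by (simp add: hmat_eq_iff trace_def sum_UNIV_2 complex_eq_iff field_simps)
qed

lemma selfadj_family_hmat:
  fixes L :: "nat \<Rightarrow> cmat"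
  assumes "\<forall>j\<in>{1..3}. selfadj (L j)"
  obtains t \<alpha> \<beta> where "\<And>j. j \<in> {1..3} \<Longrightarrow> L j = hmat (t j) (\<alpha> j) (\<beta> j)"
proof
  fix j :: nat
  assume "j \<in> {1..3}"
  then show "L j = hmat (Re (trace (L j)) / 2) (Re (L j $ 0 $ 0 - L j $ 1 $ 1) / 2) (L j $ 0 $ 1)"
    using assms selfadj_imp_hmat by blast
qed

lemma trace_hmat: "trace (hmat t \<alpha> \<beta>) = of_real (2 * t)"
  by (simp add: trace_def sum_UNIV_2)

lemma trace_hmat_mult:
  "trace (hmat t \<alpha> \<beta> ** hmat t' \<alpha>' \<beta>') =
     of_real (2 * (t * t' + \<alpha> * \<alpha>' + Re \<beta> * Re \<beta>' + Im \<beta> * Im \<beta>'))"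
  by (simp add: trace_def sum_UNIV_2 matrix_matrix_mult_def complex_eq_iff algebra_simps)

lemma sum_scaleR_hmat:
  "(\<Sum>j\<in>J. r j *\<^sub>R hmat (t j) (\<alpha> j) (\<beta> j)) =
     hmat (\<Sum>j\<in>J. r j * t j) (\<Sum>j\<in>J. r j * \<alpha> j) (\<Sum>j\<in>J. r j *\<^sub>R \<beta> j)"
proof -
  have entry: "(\<Sum>j\<in>J. r j *\<^sub>R hmat (t j) (\<alpha> j) (\<beta> j)) $ i $ k =
      (\<Sum>j\<in>J. r j *\<^sub>R (hmat (t j) (\<alpha> j) (\<beta> j) $ i $ k))" for i k
    by simp
  have "(\<Sum>j\<in>J. r j *\<^sub>R complex_of_real (t j + \<alpha> j)) =
      of_real ((\<Sum>j\<in>J. r j * t j) + (\<Sum>j\<in>J. r j * \<alpha> j))"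
    by (simp add: complex_eq_iff sum.distrib distrib_left)
  moreover have "(\<Sum>j\<in>J. r j *\<^sub>R complex_of_real (t j - \<alpha> j)) =
      of_real ((\<Sum>j\<in>J. r j * t j) - (\<Sum>j\<in>J. r j * \<alpha> j))"
    by (simp add: complex_eq_iff sum_subtractf right_diff_distrib)
  moreover have "(\<Sum>j\<in>J. r j *\<^sub>R cnj (\<beta> j)) = cnj (\<Sum>j\<in>J. r j *\<^sub>R \<beta> j)"
    by simp
  ultimately show ?thesis
    unfolding hmat_eq_iff entry hmat_nth by blast
qed

definition diffc_coord :: "real \<Rightarrow> complex \<Rightarrow> complex \<Rightarrow> complex" where
  "diffc_coord \<alpha> \<beta> w = cnj \<beta> - 2 * of_real \<alpha> * w - \<beta> * w\<^sup>2"

lemma diffc_hmat: "L j = hmat t \<alpha> \<beta> \<Longrightarrow> diffc L j w = diffc_coord \<alpha> \<beta> w"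
  by (simp add: diffc_def diffc_coord_def matrix_vector_mult_def sum_UNIV_2 Wv_def
      algebra_simps power2_eq_square)

text \<open>Since \<open>X\<^sup>2 = (t\<^sup>2 + \<alpha>\<^sup>2 + \<bar>\<beta>\<bar>\<^sup>2) I + 2 t (X - t I)\<close> and the diffusion coefficient
  vanishes on multiples of \<open>I\<close>, the first summand contributes \<open>-t \<sigma>\<close>.\<close>

lemma drift_summand_hmat:
  assumes "X = hmat t \<alpha> \<beta>"
  shows "(1/2) * (w * ((cadj X ** X) *v Wv w) $ 0 - ((cadj X ** X) *v Wv w) $ 1)
           + (w * ((X *v Wv w) $ 0)\<^sup>2 - (X *v Wv w) $ 0 * (X *v Wv w) $ 1)
         = - (2 * of_real t * diffc_coord \<alpha> \<beta> w + (of_real \<alpha> + \<beta> * w) * diffc_coord \<alpha> \<beta> w)"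
proof -
  have "cadj X = X" using assms selfadj_hmat by (simp add: selfadj_def)
  then show ?thesis
    unfolding assms
    by (simp add: diffc_coord_def matrix_vector_mult_def matrix_matrix_mult_def sum_UNIV_2 Wv_def
        algebra_simps power2_eq_square)
qed

lemma drift_hmat:
  assumes "\<And>j. j \<in> {1..3} \<Longrightarrow> L j = hmat (t j) (\<alpha> j) (\<beta> j)"
  shows "drift L w =
           - 2 * (\<Sum>j\<in>{1..3}. of_real (t j) * diffc_coord (\<alpha> j) (\<beta> j) w)
           - (\<Sum>j\<in>{1..3}. (of_real (\<alpha> j) + \<beta> j * w) * diffc_coord (\<alpha> j) (\<beta> j) w)"
proof -
  have "drift L w = (\<Sum>j\<in>{1..3}.
          (1/2) * (w * ((cadj (L j) ** L j) *v Wv w) $ 0 - ((cadj (L j) ** L j) *v Wv w) $ 1)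
          + (w * ((L j *v Wv w) $ 0)\<^sup>2 - (L j *v Wv w) $ 0 * (L j *v Wv w) $ 1))"
    by (simp add: drift_def sum_distrib_left sum.distrib)
  also have "\<dots> = (\<Sum>j\<in>{1..3}. - (2 * of_real (t j) * diffc_coord (\<alpha> j) (\<beta> j) w
          + (of_real (\<alpha> j) + \<beta> j * w) * diffc_coord (\<alpha> j) (\<beta> j) w))"
    using drift_summand_hmat assms by (intro sum.cong) auto
  finally show ?thesis
    by (simp add: sum_subtractf sum_negf sum_distrib_left mult.assoc)
qed

section \<open>Orthogonal real \<open>3 \<times> 3\<close> matrices\<close>

text \<open>Both notions refer to the real \<open>3 \<times> 3\<close> matrix whose \<open>j\<close>-th row is
  \<open>(\<alpha> j, Re (\<beta> j), Im (\<beta> j))\<close>.\<close>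

definition orthogonal_rows :: "(nat \<Rightarrow> real) \<Rightarrow> (nat \<Rightarrow> complex) \<Rightarrow> real \<Rightarrow> bool" where
  "orthogonal_rows \<alpha> \<beta> s \<longleftrightarrow>
     (\<forall>j\<in>{1..3}. \<forall>k\<in>{1..3}.
        \<alpha> j * \<alpha> k + Re (\<beta> j) * Re (\<beta> k) + Im (\<beta> j) * Im (\<beta> k) = (if j = k then s else 0))"

definition orthogonal_columns :: "(nat \<Rightarrow> real) \<Rightarrow> (nat \<Rightarrow> complex) \<Rightarrow> real \<Rightarrow> bool" where
  "orthogonal_columns \<alpha> \<beta> s \<longleftrightarrow>
     (\<Sum>j\<in>{1..3}. \<alpha> j * \<alpha> j) = s \<and> (\<Sum>j\<in>{1..3}. Re (\<beta> j) * Re (\<beta> j)) = s \<and>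
     (\<Sum>j\<in>{1..3}. Im (\<beta> j) * Im (\<beta> j)) = s \<and> (\<Sum>j\<in>{1..3}. \<alpha> j * Re (\<beta> j)) = 0 \<and>
     (\<Sum>j\<in>{1..3}. \<alpha> j * Im (\<beta> j)) = 0 \<and> (\<Sum>j\<in>{1..3}. Re (\<beta> j) * Im (\<beta> j)) = 0"

lemma orthogonal_columns_iff_complex:
  "orthogonal_columns \<alpha> \<beta> s \<longleftrightarrow>
     (\<Sum>j\<in>{1..3}. (\<alpha> j)\<^sup>2) = s \<and> (\<Sum>j\<in>{1..3}. (cmod (\<beta> j))\<^sup>2) = 2 * s \<and>
     (\<Sum>j\<in>{1..3}. of_real (\<alpha> j) * \<beta> j) = 0 \<and> (\<Sum>j\<in>{1..3}. (\<beta> j)\<^sup>2) = 0"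
proof -
  have "(\<Sum>j\<in>{1..3}. (cmod (\<beta> j))\<^sup>2) =
      (\<Sum>j\<in>{1..3}. Re (\<beta> j) * Re (\<beta> j)) + (\<Sum>j\<in>{1..3}. Im (\<beta> j) * Im (\<beta> j))"
    unfolding cmod_power2 by (simp add: power2_eq_square sum.distrib)
  moreover have "(\<Sum>j\<in>{1..3}. (\<beta> j)\<^sup>2) = 0 \<longleftrightarrow>
      (\<Sum>j\<in>{1..3}. Re (\<beta> j) * Re (\<beta> j)) = (\<Sum>j\<in>{1..3}. Im (\<beta> j) * Im (\<beta> j)) \<and>
      (\<Sum>j\<in>{1..3}. Re (\<beta> j) * Im (\<beta> j)) = 0"
    by (simp add: complex_eq_iff power2_eq_square sum_subtractf mult.commute flip: sum_distrib_left)
  moreover have "(\<Sum>j\<in>{1..3}. of_real (\<alpha> j) * \<beta> j) = 0 \<longleftrightarrow>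
      (\<Sum>j\<in>{1..3}. \<alpha> j * Re (\<beta> j)) = 0 \<and> (\<Sum>j\<in>{1..3}. \<alpha> j * Im (\<beta> j)) = 0"
    by (simp add: complex_eq_iff)
  ultimately show ?thesis
    unfolding orthogonal_columns_def by (auto simp: power2_eq_square)
qed

text \<open>For the matrix \<open>M\<close> with rows \<open>(x j, y j, z j)\<close>: both sides equal
  \<open>tr ((M M\<^sup>T)\<^sup>2) - 2 s tr (M M\<^sup>T) + 3 s\<^sup>2\<close>, i.e. \<open>\<parallel>M M\<^sup>T - s I\<parallel>\<^sup>2 = \<parallel>M\<^sup>T M - s I\<parallel>\<^sup>2\<close>.\<close>

lemma gram_defect_transpose:
  fixes x y z :: "nat \<Rightarrow> real"
  defines "row_ip j k \<equiv> x j * x k + y j * y k + z j * z k"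
    and "col_ip u v \<equiv> u 1 * v 1 + u 2 * v 2 + u 3 * v 3"
  shows "(row_ip 1 1 - s)\<^sup>2 + (row_ip 2 2 - s)\<^sup>2 + (row_ip 3 3 - s)\<^sup>2
           + 2 * (row_ip 1 2)\<^sup>2 + 2 * (row_ip 1 3)\<^sup>2 + 2 * (row_ip 2 3)\<^sup>2
         = (col_ip x x - s)\<^sup>2 + (col_ip y y - s)\<^sup>2 + (col_ip z z - s)\<^sup>2
           + 2 * (col_ip x y)\<^sup>2 + 2 * (col_ip x z)\<^sup>2 + 2 * (col_ip y z)\<^sup>2"
  unfolding row_ip_def col_ip_def by (simp add: power2_eq_square algebra_simps)

lemma sum_six_squares_eq_0_iff:
  fixes a b c d e f :: real
  shows "a\<^sup>2 + b\<^sup>2 + c\<^sup>2 + 2 * d\<^sup>2 + 2 * e\<^sup>2 + 2 * f\<^sup>2 = 0 \<longleftrightarrow>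
           a = 0 \<and> b = 0 \<and> c = 0 \<and> d = 0 \<and> e = 0 \<and> f = 0"
proof -
  have "0 \<le> a\<^sup>2" "0 \<le> b\<^sup>2" "0 \<le> c\<^sup>2" "0 \<le> d\<^sup>2" "0 \<le> e\<^sup>2" "0 \<le> f\<^sup>2"
    by simp_all
  then have "a\<^sup>2 + b\<^sup>2 + c\<^sup>2 + 2 * d\<^sup>2 + 2 * e\<^sup>2 + 2 * f\<^sup>2 = 0 \<longleftrightarrow>
      a\<^sup>2 = 0 \<and> b\<^sup>2 = 0 \<and> c\<^sup>2 = 0 \<and> d\<^sup>2 = 0 \<and> e\<^sup>2 = 0 \<and> f\<^sup>2 = 0"
    by linarith
  then show ?thesis by simp
qed

lemma orthogonal_rows_iff_columns:
  "orthogonal_rows \<alpha> \<beta> s \<longleftrightarrow> orthogonal_columns \<alpha> \<beta> s"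
proof -
  define y z where "y j = Re (\<beta> j)" and "z j = Im (\<beta> j)" for j
  define row_ip where "row_ip j k = \<alpha> j * \<alpha> k + y j * y k + z j * z k" for j k
  define col_ip where "col_ip u v = u 1 * v 1 + u 2 * v 2 + u 3 * v 3" for u v :: "nat \<Rightarrow> real"
  have one_to_three: "{1..3::nat} = {1, 2, 3}" by auto
  have "orthogonal_rows \<alpha> \<beta> s \<longleftrightarrow>
      row_ip 1 1 - s = 0 \<and> row_ip 2 2 - s = 0 \<and> row_ip 3 3 - s = 0 \<and>
      row_ip 1 2 = 0 \<and> row_ip 1 3 = 0 \<and> row_ip 2 3 = 0"
    unfolding orthogonal_rows_def one_to_three row_ip_def y_def z_def
    by (simp add: mult.commute conj_commute) (smt (verit))
  also have "\<dots> \<longleftrightarrow> (row_ip 1 1 - s)\<^sup>2 + (row_ip 2 2 - s)\<^sup>2 + (row_ip 3 3 - s)\<^sup>2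
           + 2 * (row_ip 1 2)\<^sup>2 + 2 * (row_ip 1 3)\<^sup>2 + 2 * (row_ip 2 3)\<^sup>2 = 0"
    by (rule sum_six_squares_eq_0_iff[symmetric])
  also have "\<dots> \<longleftrightarrow> (col_ip \<alpha> \<alpha> - s)\<^sup>2 + (col_ip y y - s)\<^sup>2 + (col_ip z z - s)\<^sup>2
           + 2 * (col_ip \<alpha> y)\<^sup>2 + 2 * (col_ip \<alpha> z)\<^sup>2 + 2 * (col_ip y z)\<^sup>2 = 0"
    unfolding row_ip_def col_ip_def gram_defect_transpose ..
  also have "\<dots> \<longleftrightarrow>
      col_ip \<alpha> \<alpha> - s = 0 \<and> col_ip y y - s = 0 \<and> col_ip z z - s = 0 \<and>
      col_ip \<alpha> y = 0 \<and> col_ip \<alpha> z = 0 \<and> col_ip y z = 0"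
    by (rule sum_six_squares_eq_0_iff)
  also have "\<dots> \<longleftrightarrow> orthogonal_columns \<alpha> \<beta> s"
    unfolding orthogonal_columns_def sum_1_to_3 col_ip_def y_def z_def by auto
  finally show ?thesis .
qed

lemma orthogonal_rows_0_imp_0:
  assumes "orthogonal_rows \<alpha> \<beta> 0" and "j \<in> {1..3}"
  shows "\<alpha> j = 0 \<and> \<beta> j = 0"
proof -
  have "\<alpha> j * \<alpha> j + Re (\<beta> j) * Re (\<beta> j) + Im (\<beta> j) * Im (\<beta> j) = 0"
    using assms unfolding orthogonal_rows_def by simp
  moreover have "0 \<le> \<alpha> j * \<alpha> j" "0 \<le> Re (\<beta> j) * Re (\<beta> j)" "0 \<le> Im (\<beta> j) * Im (\<beta> j)"
    by simp_all
  ultimately show ?thesis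
    by (simp add: complex_eq_iff add_nonneg_eq_0_iff)
qed

lemma orthogonal_rows_imp_independent:
  assumes rows: "orthogonal_rows \<alpha> \<beta> s" and "s \<noteq> 0"
    and "(\<Sum>j\<in>{1..3}. r j * \<alpha> j) = 0" and "(\<Sum>j\<in>{1..3}. r j *\<^sub>R \<beta> j) = 0"
    and k: "k \<in> {1..3}"
  shows "r k = 0"
proof -
  have "r k * s = (\<Sum>j\<in>{1..3}. if j = k then r j * s else 0)"
    using k by simp
  also have "\<dots> = (\<Sum>j\<in>{1..3}. r j * (\<alpha> j * \<alpha> k + Re (\<beta> j) * Re (\<beta> k) + Im (\<beta> j) * Im (\<beta> k)))"
    using rows k by (intro sum.cong) (auto simp: orthogonal_rows_def)
  also have "\<dots> = (\<Sum>j\<in>{1..3}. r j * \<alpha> j) * \<alpha> k + Re (\<Sum>j\<in>{1..3}. r j *\<^sub>R \<beta> j) * Re (\<beta> k)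
      + Im (\<Sum>j\<in>{1..3}. r j *\<^sub>R \<beta> j) * Im (\<beta> k)"
    by (simp add: sum.distrib sum_distrib_left algebra_simps)
  also have "\<dots> = 0"
    using assms by simp
  finally show ?thesis
    using \<open>s \<noteq> 0\<close> by simp
qed

lemma orthogonal_columns_imp_spanning:
  assumes cols: "orthogonal_columns \<alpha> \<beta> s" and "s \<noteq> 0"
  obtains r where "(\<Sum>j\<in>{1..3}. r j * \<alpha> j) = a" and "(\<Sum>j\<in>{1..3}. r j *\<^sub>R \<beta> j) = b"
proof
  define r where "r j = (\<alpha> j * a + Re (\<beta> j) * Re b + Im (\<beta> j) * Im b) / s" for j
  have r_comb: "(\<Sum>j\<in>{1..3}. r j * u j) = (a * (\<Sum>j\<in>{1..3}. \<alpha> j * u j)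
      + Re b * (\<Sum>j\<in>{1..3}. Re (\<beta> j) * u j) + Im b * (\<Sum>j\<in>{1..3}. Im (\<beta> j) * u j)) / s" for u
    by (simp add: r_def sum_divide_distrib[symmetric] sum.distrib sum_distrib_left algebra_simps)
  show "(\<Sum>j\<in>{1..3}. r j * \<alpha> j) = a"
    using cols \<open>s \<noteq> 0\<close> unfolding r_comb orthogonal_columns_def by (simp add: mult.commute)
  have "(\<Sum>j\<in>{1..3}. r j * Re (\<beta> j)) = Re b" "(\<Sum>j\<in>{1..3}. r j * Im (\<beta> j)) = Im b"
    using cols \<open>s \<noteq> 0\<close> unfolding r_comb orthogonal_columns_def by (simp_all add: mult.commute)
  then show "(\<Sum>j\<in>{1..3}. r j *\<^sub>R \<beta> j) = b"
    by (simp add: complex_eq_iff)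
qed

lemma trace_orth_iff_orthogonal_rows:
  assumes L: "\<And>j. j \<in> {1..3} \<Longrightarrow> L j = hmat 0 (\<alpha> j) (\<beta> j)"
  shows "trace_orth L (2 * s) \<longleftrightarrow> orthogonal_rows \<alpha> \<beta> s"
proof -
  have "trace (L j ** L k) = of_real (2 * s) * (if j = k then 1 else 0) \<longleftrightarrow>
      \<alpha> j * \<alpha> k + Re (\<beta> j) * Re (\<beta> k) + Im (\<beta> j) * Im (\<beta> k) = (if j = k then s else 0)"
    if "j \<in> {1..3}" "k \<in> {1..3}" for j k
  proof -
    define x where "x = \<alpha> j * \<alpha> k + Re (\<beta> j) * Re (\<beta> k) + Im (\<beta> j) * Im (\<beta> k)"
    have "trace (L j ** L k) = of_real (2 * x)"
      using that by (simp add: L trace_hmat_mult x_def)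
    then show ?thesis
      unfolding x_def[symmetric] by (cases "j = k") simp_all
  qed
  then show ?thesis
    unfolding trace_orth_def orthogonal_rows_def by simp
qed

lemma orthogonal_rows_imp_basis:
  assumes L: "\<And>j. j \<in> {1..3} \<Longrightarrow> L j = hmat 0 (\<alpha> j) (\<beta> j)"
    and rows: "orthogonal_rows \<alpha> \<beta> s" and "s \<noteq> 0"
  shows "is_real_basis3 L \<and> trace_orth L (2 * s)"
proof -
  have cols: "orthogonal_columns \<alpha> \<beta> s"
    using rows orthogonal_rows_iff_columns by blast
  have comb: "(\<Sum>j\<in>{1..3}. r j *\<^sub>R L j) =
      hmat 0 (\<Sum>j\<in>{1..3}. r j * \<alpha> j) (\<Sum>j\<in>{1..3}. r j *\<^sub>R \<beta> j)" for r
    using sum_scaleR_hmat[of r "\<lambda>_. 0" \<alpha> \<beta> "{1..3}"] L by simp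
  have "L j \<in> traceless_sa" if "j \<in> {1..3}" for j
    using L[OF that] by (simp add: traceless_sa_def selfadj_hmat trace_hmat)
  moreover have "r j = 0"
    if "(\<Sum>j\<in>{1..3}. r j *\<^sub>R L j) = 0" "j \<in> {1..3}" for r j
  proof (rule orthogonal_rows_imp_independent[OF rows \<open>s \<noteq> 0\<close> _ _ \<open>j \<in> {1..3}\<close>])
    have "hmat 0 (\<Sum>j\<in>{1..3}. r j * \<alpha> j) (\<Sum>j\<in>{1..3}. r j *\<^sub>R \<beta> j) = 0"
      using that(1) comb by simp
    then show "(\<Sum>j\<in>{1..3}. r j * \<alpha> j) = 0" "(\<Sum>j\<in>{1..3}. r j *\<^sub>R \<beta> j) = 0"
      unfolding hmat_eq_0_iff by simp_all
  qed
  moreover have "\<exists>r. X = (\<Sum>j\<in>{1..3}. r j *\<^sub>R L j)" if "X \<in> traceless_sa" for X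
  proof -
    have "X = hmat 0 (Re (X $ 0 $ 0 - X $ 1 $ 1) / 2) (X $ 0 $ 1)"
      using that selfadj_imp_hmat by (fastforce simp: traceless_sa_def)
    moreover obtain r where "(\<Sum>j\<in>{1..3}. r j * \<alpha> j) = Re (X $ 0 $ 0 - X $ 1 $ 1) / 2"
      and "(\<Sum>j\<in>{1..3}. r j *\<^sub>R \<beta> j) = X $ 0 $ 1"
      by (rule orthogonal_columns_imp_spanning[OF cols \<open>s \<noteq> 0\<close>])
    ultimately have "X = (\<Sum>j\<in>{1..3}. r j *\<^sub>R L j)"
      unfolding comb by (simp only:)
    then show ?thesis by blast
  qed
  moreover have "trace_orth L (2 * s)"
    using rows trace_orth_iff_orthogonal_rows[of L \<alpha> \<beta> s, OF L] by simp
  ultimately show ?thesis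
    unfolding is_real_basis3_def by blast
qed

lemma is_real_basis3_nonzero:
  assumes "is_real_basis3 L" and "k \<in> {1..3}"
  shows "L k \<noteq> 0"
proof
  assume "L k = 0"
  then have "(\<Sum>j\<in>{1..3}. (if j = k then 1 else 0) *\<^sub>R L j) = 0"
    by (auto intro!: sum.neutral)
  moreover have "\<forall>r. (\<Sum>j\<in>{1..3}. r j *\<^sub>R L j) = 0 \<longrightarrow> (\<forall>j\<in>{1..3}. r j = 0)"
    using assms(1) unfolding is_real_basis3_def by blast
  ultimately show False
    using assms(2) by (auto dest!: spec[of _ "\<lambda>j. if j = k then 1 else 0"] bspec[of _ _ k])
qed

lemma pauli_hmat:
  "j \<in> {1..3} \<Longrightarrow>
     pauli j = hmat 0 (if j = 3 then 1 else 0) (if j = 1 then 1 else if j = 2 then - \<i> else 0)"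
  by (auto simp: hmat_eq_iff pauli_def)

lemma pauli_orthogonal_rows:
  "orthogonal_rows (\<lambda>j. if j = 3 then 1 else 0)
     (\<lambda>j. if j = 1 then 1 else if j = 2 then - \<i> else 0) 1"
  by (auto simp: orthogonal_rows_def)

section \<open>The generator on quadratic polynomials\<close>

definition quadratic :: "real \<Rightarrow> real \<Rightarrow> real \<Rightarrow> real \<Rightarrow> real \<Rightarrow> real \<Rightarrow> complex \<Rightarrow> real" where
  "quadratic p q r k m n z =
     p * (Re z)\<^sup>2 + q * (Re z * Im z) + r * (Im z)\<^sup>2 + k * Re z + m * Im z + n"

lemma px_quadratic: "px (quadratic p q r k m n) = quadratic 0 0 0 (2 * p) q k"
proof
  fix z
  have "((\<lambda>t. p * (Re z + t)\<^sup>2 + q * ((Re z + t) * Im z) + r * (Im z)\<^sup>2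
             + k * (Re z + t) + m * Im z + n)
      has_real_derivative 2 * p * Re z + q * Im z + k) (at 0)"
    by (auto intro!: derivative_eq_intros)
  then show "px (quadratic p q r k m n) z = quadratic 0 0 0 (2 * p) q k z"
    unfolding px_def quadratic_def by (simp add: DERIV_imp_deriv)
qed

lemma py_quadratic: "py (quadratic p q r k m n) = quadratic 0 0 0 q (2 * r) m"
proof
  fix z
  have "((\<lambda>t. p * (Re z)\<^sup>2 + q * (Re z * (Im z + t)) + r * (Im z + t)\<^sup>2
             + k * Re z + m * (Im z + t) + n)
      has_real_derivative q * Re z + 2 * r * Im z + m) (at 0)"
    by (auto intro!: derivative_eq_intros)
  then show "py (quadratic p q r k m n) z = quadratic 0 0 0 q (2 * r) m z"
    unfolding py_def quadratic_def by (simp add: DERIV_imp_deriv)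
qed

lemma gen_expand:
  "gen L f z = Re (drift L z) * px f z + Im (drift L z) * py f z
     + ((\<Sum>j\<in>{1..3}. (Re (diffc L j z))\<^sup>2) * pxx f z
        + 2 * (\<Sum>j\<in>{1..3}. Re (diffc L j z) * Im (diffc L j z)) * pxy f z
        + (\<Sum>j\<in>{1..3}. (Im (diffc L j z))\<^sup>2) * pyy f z) / 2"
  by (simp add: gen_def sum.distrib sum_distrib_left sum_distrib_right algebra_simps)

lemma gen_quadratic:
  "gen L (quadratic p q r k m n) z =
     Re (drift L z) * (2 * p * Re z + q * Im z + k) + Im (drift L z) * (q * Re z + 2 * r * Im z + m)
     + p * (\<Sum>j\<in>{1..3}. (Re (diffc L j z))\<^sup>2)
     + q * (\<Sum>j\<in>{1..3}. Re (diffc L j z) * Im (diffc L j z))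
     + r * (\<Sum>j\<in>{1..3}. (Im (diffc L j z))\<^sup>2)"
  unfolding gen_expand pxx_def pyy_def pxy_def px_quadratic py_quadratic
  by (simp add: quadratic_def algebra_simps)

lemma LB_quadratic: "LB (quadratic p q r k m n) z = (1 + (Re z)\<^sup>2 + (Im z)\<^sup>2)\<^sup>2 * (p + r) / 2"
  unfolding LB_def pxx_def pyy_def px_quadratic py_quadratic
  by (simp add: quadratic_def algebra_simps)

lemma sum_sq_eq_0_iff_Re_Im:
  fixes \<sigma> :: "nat \<Rightarrow> complex"
  shows "(\<Sum>j\<in>J. (\<sigma> j)\<^sup>2) = 0 \<longleftrightarrow>
           (\<Sum>j\<in>J. (Re (\<sigma> j))\<^sup>2) = (\<Sum>j\<in>J. (Im (\<sigma> j))\<^sup>2) \<and> (\<Sum>j\<in>J. Re (\<sigma> j) * Im (\<sigma> j)) = 0"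
  by (simp add: complex_eq_iff power2_eq_square sum_subtractf mult.commute flip: sum_distrib_left)

lemma sum_norm_sq_Re_Im:
  fixes \<sigma> :: "nat \<Rightarrow> complex"
  shows "(\<Sum>j\<in>J. (cmod (\<sigma> j))\<^sup>2) = (\<Sum>j\<in>J. (Re (\<sigma> j))\<^sup>2) + (\<Sum>j\<in>J. (Im (\<sigma> j))\<^sup>2)"
  unfolding cmod_power2 by (simp add: sum.distrib)

lemma gen_eq_LB_iff:
  "(\<forall>f z. gen L f z = c * LB f z) \<longleftrightarrow>
     (\<forall>z. drift L z = 0 \<and> (\<Sum>j\<in>{1..3}. (diffc L j z)\<^sup>2) = 0 \<and>
          (\<Sum>j\<in>{1..3}. (cmod (diffc L j z))\<^sup>2) = c * (1 + (cmod z)\<^sup>2)\<^sup>2)"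
    (is "?gen \<longleftrightarrow> (\<forall>z. ?coeffs z)")
proof
  assume gen: ?gen
  show "\<forall>z. ?coeffs z"
  proof
    fix z
    let ?Q = "1 + (Re z)\<^sup>2 + (Im z)\<^sup>2"
    have "Re (drift L z) = 0" "Im (drift L z) = 0"
      using gen[rule_format, of "quadratic 0 0 0 1 0 0" z]
        gen[rule_format, of "quadratic 0 0 0 0 1 0" z]
      by (simp_all add: gen_quadratic LB_quadratic)
    then have drift: "drift L z = 0"
      by (simp add: complex_eq_iff)
    have "(\<Sum>j\<in>{1..3}. (Re (diffc L j z))\<^sup>2) - (\<Sum>j\<in>{1..3}. (Im (diffc L j z))\<^sup>2) = 0"
      "(\<Sum>j\<in>{1..3}. Re (diffc L j z) * Im (diffc L j z)) = 0"
      "(\<Sum>j\<in>{1..3}. (Re (diffc L j z))\<^sup>2) + (\<Sum>j\<in>{1..3}. (Im (diffc L j z))\<^sup>2) = c * ?Q\<^sup>2"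
      using gen[rule_format, of "quadratic 1 0 (-1) 0 0 0" z]
        gen[rule_format, of "quadratic 0 1 0 0 0 0" z]
        gen[rule_format, of "quadratic 1 0 1 0 0 0" z]
      by (simp_all add: gen_quadratic LB_quadratic drift)
    then show "?coeffs z"
      using drift unfolding sum_sq_eq_0_iff_Re_Im sum_norm_sq_Re_Im
      by (simp add: cmod_power2 add.assoc)
  qed
next
  assume coeffs: "\<forall>z. ?coeffs z"
  show ?gen
  proof (intro allI)
    fix f z
    let ?Q = "1 + (Re z)\<^sup>2 + (Im z)\<^sup>2"
    have drift: "drift L z = 0"
      and Re_sq: "(\<Sum>j\<in>{1..3}. (Re (diffc L j z))\<^sup>2) = c * ?Q\<^sup>2 / 2"
      and Im_sq: "(\<Sum>j\<in>{1..3}. (Im (diffc L j z))\<^sup>2) = c * ?Q\<^sup>2 / 2"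
      and Re_Im: "(\<Sum>j\<in>{1..3}. Re (diffc L j z) * Im (diffc L j z)) = 0"
      using coeffs[rule_format, of z]
      unfolding sum_sq_eq_0_iff_Re_Im sum_norm_sq_Re_Im by (simp_all add: cmod_power2 add.assoc)
    show "gen L f z = c * LB f z"
      unfolding gen_expand LB_def drift Re_sq Im_sq Re_Im by (simp add: field_simps)
  qed
qed

section \<open>The coefficients in Pauli coordinates\<close>

lemma sum_diffc_coord_sq:
  "(\<Sum>j\<in>J. (diffc_coord (\<alpha> j) (\<beta> j) w)\<^sup>2) =
     cnj (\<Sum>j\<in>J. (\<beta> j)\<^sup>2) - 4 * w * cnj (\<Sum>j\<in>J. of_real (\<alpha> j) * \<beta> j)
     + 4 * w\<^sup>2 * of_real (\<Sum>j\<in>J. (\<alpha> j)\<^sup>2) - 2 * w\<^sup>2 * of_real (\<Sum>j\<in>J. (cmod (\<beta> j))\<^sup>2)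
     + 4 * w ^ 3 * (\<Sum>j\<in>J. of_real (\<alpha> j) * \<beta> j) + w ^ 4 * (\<Sum>j\<in>J. (\<beta> j)\<^sup>2)"
proof -
  have "(diffc_coord (\<alpha> j) (\<beta> j) w)\<^sup>2 =
      cnj ((\<beta> j)\<^sup>2) - 4 * w * cnj (of_real (\<alpha> j) * \<beta> j)
      + 4 * w\<^sup>2 * of_real ((\<alpha> j)\<^sup>2) - 2 * w\<^sup>2 * of_real ((cmod (\<beta> j))\<^sup>2)
      + 4 * w ^ 3 * (of_real (\<alpha> j) * \<beta> j) + w ^ 4 * (\<beta> j)\<^sup>2" for j
    unfolding diffc_coord_def complex_norm_square by (simp add: power2_eq_square) algebra
  then show ?thesis
    by (simp only: sum.distrib sum_subtractf flip: sum_distrib_left cnj_sum of_real_sum)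
qed

lemma sum_diffc_coord_sq_eq_0_iff:
  "(\<forall>w. (\<Sum>j\<in>{1..3}. (diffc_coord (\<alpha> j) (\<beta> j) w)\<^sup>2) = 0) \<longleftrightarrow> (\<exists>s. orthogonal_columns \<alpha> \<beta> s)"
proof
  define A N X B where "A = (\<Sum>j\<in>{1..3}. (\<alpha> j)\<^sup>2)" and "N = (\<Sum>j\<in>{1..3}. (cmod (\<beta> j))\<^sup>2)"
    and "X = (\<Sum>j\<in>{1..3}. of_real (\<alpha> j) * \<beta> j)" and "B = (\<Sum>j\<in>{1..3}. (\<beta> j)\<^sup>2)"
  define c where "c = (\<lambda>i. [cnj B, - 4 * cnj X, 4 * of_real A - 2 * of_real N, 4 * X, B] ! i)"
  assume "\<forall>w. (\<Sum>j\<in>{1..3}. (diffc_coord (\<alpha> j) (\<beta> j) w)\<^sup>2) = 0"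
  moreover have "(\<Sum>j\<in>{1..3}. (diffc_coord (\<alpha> j) (\<beta> j) w)\<^sup>2) = (\<Sum>i\<le>4. c i * w ^ i)" for w
    unfolding sum_diffc_coord_sq
    by (simp add: c_def A_def N_def X_def B_def numeral_eq_Suc algebra_simps)
  ultimately have "\<forall>i\<le>4. c i = 0"
    using polyfun_eq_0[of c 4] by simp
  from this[rule_format, of 2] this[rule_format, of 3] this[rule_format, of 4]
  have "N = 2 * A" "X = 0" "B = 0"
    unfolding c_def by (simp_all add: complex_eq_iff)
  then show "\<exists>s. orthogonal_columns \<alpha> \<beta> s"
    unfolding orthogonal_columns_iff_complex A_def N_def X_def B_def by blast
next
  assume "\<exists>s. orthogonal_columns \<alpha> \<beta> s"
  then show "\<forall>w. (\<Sum>j\<in>{1..3}. (diffc_coord (\<alpha> j) (\<beta> j) w)\<^sup>2) = 0"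
    unfolding orthogonal_columns_iff_complex sum_diffc_coord_sq by auto
qed

lemma sum_norm_diffc_coord:
  assumes "orthogonal_columns \<alpha> \<beta> s"
  shows "(\<Sum>j\<in>{1..3}. (cmod (diffc_coord (\<alpha> j) (\<beta> j) w))\<^sup>2) = 2 * s * (1 + (cmod w)\<^sup>2)\<^sup>2"
proof -
  have pointwise: "of_real ((cmod (diffc_coord (\<alpha> j) (\<beta> j) w))\<^sup>2) =
      (1 + (w * cnj w)\<^sup>2) * of_real ((cmod (\<beta> j))\<^sup>2) + 4 * (w * cnj w) * of_real ((\<alpha> j)\<^sup>2)
      - 2 * (cnj w - w * (cnj w)\<^sup>2) * cnj (of_real (\<alpha> j) * \<beta> j)
      - 2 * (w - w\<^sup>2 * cnj w) * (of_real (\<alpha> j) * \<beta> j)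
      - (cnj w)\<^sup>2 * cnj ((\<beta> j)\<^sup>2) - w\<^sup>2 * (\<beta> j)\<^sup>2" for j
    unfolding diffc_coord_def complex_norm_square by (simp add: power2_eq_square) algebra
  have "of_real (\<Sum>j\<in>{1..3}. (cmod (diffc_coord (\<alpha> j) (\<beta> j) w))\<^sup>2) =
      (\<Sum>j\<in>{1..3}. of_real ((cmod (diffc_coord (\<alpha> j) (\<beta> j) w))\<^sup>2) :: complex)"
    by (rule of_real_sum)
  also have "\<dots> =
      (1 + (w * cnj w)\<^sup>2) * of_real (\<Sum>j\<in>{1..3}. (cmod (\<beta> j))\<^sup>2)
      + 4 * (w * cnj w) * of_real (\<Sum>j\<in>{1..3}. (\<alpha> j)\<^sup>2)
      - 2 * (cnj w - w * (cnj w)\<^sup>2) * cnj (\<Sum>j\<in>{1..3}. of_real (\<alpha> j) * \<beta> j)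
      - 2 * (w - w\<^sup>2 * cnj w) * (\<Sum>j\<in>{1..3}. of_real (\<alpha> j) * \<beta> j)
      - (cnj w)\<^sup>2 * cnj (\<Sum>j\<in>{1..3}. (\<beta> j)\<^sup>2) - w\<^sup>2 * (\<Sum>j\<in>{1..3}. (\<beta> j)\<^sup>2)"
    using pointwise
    by (simp only: sum.distrib sum_subtractf flip: sum_distrib_left cnj_sum of_real_sum)
  also have "\<dots> = of_real (2 * s * (1 + (cmod w)\<^sup>2)\<^sup>2)"
    using assms unfolding orthogonal_columns_iff_complex complex_norm_square[symmetric]
    by (simp add: algebra_simps power2_eq_square)
  finally show ?thesis
    by (simp only: of_real_eq_iff)
qed

lemma sum_drift_part_eq_0:
  assumes "orthogonal_columns \<alpha> \<beta> s"
  shows "(\<Sum>j\<in>{1..3}. (of_real (\<alpha> j) + \<beta> j * w) * diffc_coord (\<alpha> j) (\<beta> j) w) = 0"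
proof -
  have "(of_real (\<alpha> j) + \<beta> j * w) * diffc_coord (\<alpha> j) (\<beta> j) w =
      cnj (of_real (\<alpha> j) * \<beta> j) + w * of_real ((cmod (\<beta> j))\<^sup>2) - 2 * w * of_real ((\<alpha> j)\<^sup>2)
      - 3 * w\<^sup>2 * (of_real (\<alpha> j) * \<beta> j) - w ^ 3 * (\<beta> j)\<^sup>2" for j
    unfolding diffc_coord_def complex_norm_square by (simp add: power2_eq_square) algebra
  then have "(\<Sum>j\<in>{1..3}. (of_real (\<alpha> j) + \<beta> j * w) * diffc_coord (\<alpha> j) (\<beta> j) w) =
      cnj (\<Sum>j\<in>{1..3}. of_real (\<alpha> j) * \<beta> j) + w * of_real (\<Sum>j\<in>{1..3}. (cmod (\<beta> j))\<^sup>2)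
      - 2 * w * of_real (\<Sum>j\<in>{1..3}. (\<alpha> j)\<^sup>2)
      - 3 * w\<^sup>2 * (\<Sum>j\<in>{1..3}. of_real (\<alpha> j) * \<beta> j) - w ^ 3 * (\<Sum>j\<in>{1..3}. (\<beta> j)\<^sup>2)"
    by (simp only: sum.distrib sum_subtractf flip: sum_distrib_left cnj_sum of_real_sum)
  also have "\<dots> = 0"
    using assms unfolding orthogonal_columns_iff_complex by simp
  finally show ?thesis .
qed

lemma sum_scaled_diffc_coord:
  "(\<Sum>j\<in>J. of_real (t j) * diffc_coord (\<alpha> j) (\<beta> j) w) =
     cnj (\<Sum>j\<in>J. t j *\<^sub>R \<beta> j) - 2 * w * of_real (\<Sum>j\<in>J. t j * \<alpha> j) - w\<^sup>2 * (\<Sum>j\<in>J. t j *\<^sub>R \<beta> j)"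
proof -
  have "of_real (t j) * diffc_coord (\<alpha> j) (\<beta> j) w =
      cnj (t j *\<^sub>R \<beta> j) - 2 * w * of_real (t j * \<alpha> j) - w\<^sup>2 * (t j *\<^sub>R \<beta> j)" for j
    unfolding diffc_coord_def scaleR_conv_of_real by (simp add: algebra_simps)
  then show ?thesis
    by (simp only: sum_subtractf flip: sum_distrib_left cnj_sum of_real_sum)
qed

lemma gen_eq_LB_iff_hmat:
  assumes L: "\<And>j. j \<in> {1..3} \<Longrightarrow> L j = hmat (t j) (\<alpha> j) (\<beta> j)"
  shows "(\<forall>f z. gen L f z = c * LB f z) \<longleftrightarrow>
     (\<forall>w. drift L w = 0 \<and> (\<Sum>j\<in>{1..3}. (diffc_coord (\<alpha> j) (\<beta> j) w)\<^sup>2) = 0 \<and>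
          (\<Sum>j\<in>{1..3}. (cmod (diffc_coord (\<alpha> j) (\<beta> j) w))\<^sup>2) = c * (1 + (cmod w)\<^sup>2)\<^sup>2)"
proof -
  have "diffc L j w = diffc_coord (\<alpha> j) (\<beta> j) w" if "j \<in> {1..3}" for j w
    using L[OF that] by (rule diffc_hmat)
  then have "(\<Sum>j\<in>{1..3}. (diffc L j w)\<^sup>2) = (\<Sum>j\<in>{1..3}. (diffc_coord (\<alpha> j) (\<beta> j) w)\<^sup>2)"
    and "(\<Sum>j\<in>{1..3}. (cmod (diffc L j w))\<^sup>2) = (\<Sum>j\<in>{1..3}. (cmod (diffc_coord (\<alpha> j) (\<beta> j) w))\<^sup>2)"
    for w by (auto intro!: sum.cong)
  then show ?thesis
    unfolding gen_eq_LB_iff by simp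
qed

lemma drift_eq_0_imp_traceless:
  assumes L: "\<And>j. j \<in> {1..3} \<Longrightarrow> L j = hmat (t j) (\<alpha> j) (\<beta> j)"
    and rows: "orthogonal_rows \<alpha> \<beta> s" and "s \<noteq> 0" and drift_0: "\<forall>w. drift L w = 0"
    and "j \<in> {1..3}"
  shows "t j = 0"
proof (rule orthogonal_rows_imp_independent[OF rows \<open>s \<noteq> 0\<close> _ _ \<open>j \<in> {1..3}\<close>])
  have cols: "orthogonal_columns \<alpha> \<beta> s"
    using rows orthogonal_rows_iff_columns by blast
  have "\<forall>w. (\<Sum>j\<in>{1..3}. of_real (t j) * diffc_coord (\<alpha> j) (\<beta> j) w) = 0"
    using drift_0 drift_hmat[OF L] sum_drift_part_eq_0[OF cols] by simp
  from this[rule_format, of 0] this[rule_format, of 1]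
  show "(\<Sum>j\<in>{1..3}. t j * \<alpha> j) = 0" "(\<Sum>j\<in>{1..3}. t j *\<^sub>R \<beta> j) = 0"
    unfolding sum_scaled_diffc_coord by (simp_all add: complex_eq_iff)
qed

lemma gen_proportional_imp_orthogonal_basis:
  assumes "\<forall>j\<in>{1..3}. selfadj (L j)"
    and gen: "\<forall>f z. gen L f z = c * LB f z" and "c \<noteq> 0"
  shows "is_real_basis3 L \<and> trace_orth L c"
proof -
  obtain t \<alpha> \<beta> where L: "\<And>j. j \<in> {1..3} \<Longrightarrow> L j = hmat (t j) (\<alpha> j) (\<beta> j)"
    using selfadj_family_hmat[OF assms(1)] by blast
  have coeffs: "\<forall>w. drift L w = 0 \<and> (\<Sum>j\<in>{1..3}. (diffc_coord (\<alpha> j) (\<beta> j) w)\<^sup>2) = 0 \<and>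
      (\<Sum>j\<in>{1..3}. (cmod (diffc_coord (\<alpha> j) (\<beta> j) w))\<^sup>2) = c * (1 + (cmod w)\<^sup>2)\<^sup>2"
    using gen gen_eq_LB_iff_hmat[of L t \<alpha> \<beta>, OF L] by blast
  obtain s where cols: "orthogonal_columns \<alpha> \<beta> s"
    using coeffs sum_diffc_coord_sq_eq_0_iff by blast
  have "c = 2 * s"
    using coeffs sum_norm_diffc_coord[OF cols, of 0] by simp
  with \<open>c \<noteq> 0\<close> have "s \<noteq> 0" by simp
  have rows: "orthogonal_rows \<alpha> \<beta> s"
    using cols orthogonal_rows_iff_columns by blast
  have "L j = hmat 0 (\<alpha> j) (\<beta> j)" if "j \<in> {1..3}" for j
    using drift_eq_0_imp_traceless[OF L rows \<open>s \<noteq> 0\<close> _ that] coeffs L[OF that] by simp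
  from orthogonal_rows_imp_basis[OF this rows \<open>s \<noteq> 0\<close>] show ?thesis
    using \<open>c = 2 * s\<close> by simp
qed

lemma orthogonal_basis_imp_gen_eq:
  assumes basis: "is_real_basis3 L" and orth: "trace_orth L a"
  shows "a \<noteq> 0 \<and> (\<forall>f z. gen L f z = a * LB f z)"
proof -
  have traceless: "L j \<in> traceless_sa" if "j \<in> {1..3}" for j
    using basis that unfolding is_real_basis3_def by blast
  then have "\<forall>j\<in>{1..3}. selfadj (L j)"
    by (simp add: traceless_sa_def)
  then obtain t \<alpha> \<beta> where L': "\<And>j. j \<in> {1..3} \<Longrightarrow> L j = hmat (t j) (\<alpha> j) (\<beta> j)"
    using selfadj_family_hmat by blast
  have L: "L j = hmat 0 (\<alpha> j) (\<beta> j)" if "j \<in> {1..3}" for j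
    using traceless[OF that] L'[OF that] by (simp add: traceless_sa_def trace_hmat)
  have rows: "orthogonal_rows \<alpha> \<beta> (a / 2)"
    using orth trace_orth_iff_orthogonal_rows[of L \<alpha> \<beta> "a / 2", OF L] by simp
  have "a \<noteq> 0"
  proof
    assume "a = 0"
    then have "L 1 = 0"
      using rows orthogonal_rows_0_imp_0 L hmat_eq_0_iff by simp
    with basis is_real_basis3_nonzero show False by simp
  qed
  have cols: "orthogonal_columns \<alpha> \<beta> (a / 2)"
    using rows orthogonal_rows_iff_columns by blast
  have "drift L w = 0" for w
    using drift_hmat[of L "\<lambda>_. 0", OF L] sum_drift_part_eq_0[OF cols] by simp
  moreover have "(\<Sum>j\<in>{1..3}. (diffc_coord (\<alpha> j) (\<beta> j) w)\<^sup>2) = 0" for w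
    using cols sum_diffc_coord_sq_eq_0_iff by blast
  moreover have "(\<Sum>j\<in>{1..3}. (cmod (diffc_coord (\<alpha> j) (\<beta> j) w))\<^sup>2) = a * (1 + (cmod w)\<^sup>2)\<^sup>2" for w
    using sum_norm_diffc_coord[OF cols] by simp
  ultimately show ?thesis
    using \<open>a \<noteq> 0\<close> gen_eq_LB_iff_hmat[of L t \<alpha> \<beta>, OF L'] by simp
qed

theorem proposition3p3:
  fixes L :: "nat \<Rightarrow> complex^2^2"
  assumes "\<forall>j\<in>{1..3}. selfadj (L j)"
  shows "((\<exists>c::real. c \<noteq> 0 \<and> (\<forall>f z. gen L f z = c * LB f z))
            \<longleftrightarrow> (is_real_basis3 L \<and> (\<exists>a. trace_orth L a)))
         \<and> (is_real_basis3 pauli \<and> trace_orth pauli 2)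
         \<and> (is_real_basis3 L \<and> trace_orth L 1 \<longrightarrow> (\<forall>f z. gen L f z = LB f z))"
proof (intro conjI impI)
  show "(\<exists>c::real. c \<noteq> 0 \<and> (\<forall>f z. gen L f z = c * LB f z))
          \<longleftrightarrow> (is_real_basis3 L \<and> (\<exists>a. trace_orth L a))"
    using gen_proportional_imp_orthogonal_basis[OF assms] orthogonal_basis_imp_gen_eq by blast
  have "is_real_basis3 pauli \<and> trace_orth pauli (2 * 1)"
    using orthogonal_rows_imp_basis[OF pauli_hmat pauli_orthogonal_rows] by simp
  then show "is_real_basis3 pauli" "trace_orth pauli 2"
    by simp_all
next
  assume "is_real_basis3 L \<and> trace_orth L 1"
  then show "\<forall>f z. gen L f z = LB f z"
    using orthogonal_basis_imp_gen_eq by fastforce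
qed

end
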